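(* Let $\mathbb{X},\mathbb{Y}$ be finite-dimensional real polyhedral Banach spaces with $\dim\mathbb{X}=n$, $\dim\mathbb{Y}=m$. Let $T\in\mathbb{L}(\mathbb{X},\mathbb{Y})$ with $\|T\|=1$ be such that $M_T=F\cup(-F)$ for some face $F$ of $B_{\mathbb{X}}$ and $T(M_T)$ has exactly two elements. If $T$ is $k$-smooth, then $k\in\{pq:1\le p\le n,\ 1\le q\le m\}$.
   Context: Polyhedral: the closed unit ball has finitely many extreme points. $M_T=\{x:\|x\|=1,\|Tx\|=\|T\|\}$. For a unit vector $z$ of a normed space $\mathbb{Z}$, $J(z)=\{f\in\mathbb{Z}^*:\|f\|=1,f(z)=1\}$ and $z$ is $k$-smooth if $\dim\operatorname{span}J(z)=k$ ($T$ is viewed in $\mathbb{L}(\mathbb{X},\mathbb{Y})$ with operator norm). A convex set $F\subset S_{\mathbb{X}}$ is a face of $B_{\mathbb{X}}$ if whenever $x_1,x_2\in S_{\mathbb{X}}$ and $(1-t)x_1+tx_2\in F$ for some $0<t<1$, then $x_1,x_2\in F$. *)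

theory Defs
  imports "HOL-Analysis.Analysis"
begin

definition fin_dim_space :: "'a::real_normed_vector itself \<Rightarrow> bool" where
  "fin_dim_space _ \<longleftrightarrow> (\<exists>B::'a set. finite B \<and> span B = UNIV)"

definition polyhedral_space :: "'a::real_normed_vector itself \<Rightarrow> bool" where
  "polyhedral_space _ \<longleftrightarrow> finite {x::'a. x extreme_point_of (cball 0 1)}"

definition M_op :: "('a::real_normed_vector \<Rightarrow>\<^sub>L 'b::real_normed_vector) \<Rightarrow> 'a set" where
  "M_op T = {x. norm x = 1 \<and> norm (blinfun_apply T x) = norm T}"

definition ball_face :: "'a::real_normed_vector set \<Rightarrow> bool" where
  "ball_face F \<longleftrightarrow> convex F \<and> F \<subseteq> sphere 0 1 \<and>
     (\<forall>x1 x2 t. x1 \<in> sphere 0 1 \<longrightarrow> x2 \<in> sphere 0 1 \<longrightarrow> 0 < t \<longrightarrow> t < 1 \<longrightarrow>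
        (1 - t) *\<^sub>R x1 + t *\<^sub>R x2 \<in> F \<longrightarrow> x1 \<in> F \<and> x2 \<in> F)"

definition J_set :: "'z::real_normed_vector \<Rightarrow> ('z \<Rightarrow>\<^sub>L real) set" where
  "J_set z = {f. norm f = 1 \<and> blinfun_apply f z = 1}"

definition k_smooth :: "nat \<Rightarrow> 'z::real_normed_vector \<Rightarrow> bool" where
  "k_smooth k z \<longleftrightarrow> dim (span (J_set z)) = k"

end

(*
  T maps the convex set F into the finite set T(M_T), so T is constant on F, say equal to y.
  Let X be a basis of span F and G a basis of span J(y). The functionals S |-> g (S x) with
  x in X and g in G belong to J(T) and are linearly independent. Conversely, every f in J(T)
  vanishes on each operator S annihilated by all of them: if f S > 0, norming pairs of T + t S
  for t -> 0 converge to some x0 in M_T = F \<union> -F and g0 in J(T x0) with g0 (S x0) > 0, which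
  is impossible because g0 or -g0 lies in J(y). Hence dim span J(T) = |X| * |G|, where
  1 <= |X| <= n and 1 <= |G| <= dim Y* <= m.

  Finite dimensionality enters through compactness of bounded parts of finite spans and a
  Hahn-Banach theorem for finite-dimensional spaces, both proved by induction over a spanning
  set.
*)

theory Submission
  imports Defs
begin

section \<open>Compactness in finite-dimensional normed spaces\<close>

lemma closed_if_compact_Int_cball:
  fixes S :: "'v::real_normed_vector set"
  assumes "\<And>r. compact (S \<inter> cball 0 r)"
  shows "closed S"
  unfolding closed_sequential_limits
proof (intro allI impI, elim conjE)
  fix s l assume s: "\<forall>n. s n \<in> S" and sl: "s \<longlonglongrightarrow> l"
  obtain r where r: "\<And>n. norm (s n) \<le> r"
    using convergent_imp_bounded[OF sl] by (auto simp: bounded_iff)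
  have "closed (S \<inter> cball 0 r)" using assms by (rule compact_imp_closed)
  moreover have "\<forall>n. s n \<in> S \<inter> cball 0 r" using s r by simp
  ultimately show "l \<in> S" using sl closed_sequentially by blast
qed

lemma coefficient_bound_outside_closed_subspace:
  fixes b :: "'v::real_normed_vector"
  assumes "subspace S" "closed S" "b \<notin> S"
  obtains d where "d > 0" "\<And>x c. x - c *\<^sub>R b \<in> S \<Longrightarrow> \<bar>c\<bar> * d \<le> norm x"
proof
  define d where "d = infdist b S"
  show "d > 0" unfolding d_def
    using assms infdist_pos_not_in_closed subspace_0 by blast
  fix x c assume xc: "x - c *\<^sub>R b \<in> S"
  show "\<bar>c\<bar> * d \<le> norm x"
  proof (cases "c = 0")
    case False
    have "(c *\<^sub>R b - x) /\<^sub>R c \<in> S"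
      using subspace_scale[OF assms(1) xc, of "- inverse c"] by (simp add: algebra_simps)
    then have "d \<le> dist b ((c *\<^sub>R b - x) /\<^sub>R c)" unfolding d_def by (rule infdist_le)
    also have "\<dots> = norm (x /\<^sub>R c)"
      using False by (simp add: dist_norm algebra_simps)
    finally show ?thesis using False by (simp add: field_simps)
  qed simp
qed

lemma compact_span_Int_cball:
  fixes B :: "'v::real_normed_vector set"
  assumes "finite B"
  shows "compact (span B \<inter> cball 0 r)"
  using assms
proof (induction B arbitrary: r rule: finite_induct)
  case (insert b B)
  show ?case
  proof (cases "b \<in> span B")
    case True
    then show ?thesis using insert.IH by (simp add: span_redundant)
  next
    case False
    have "closed (span B)" using insert.IH by (rule closed_if_compact_Int_cball)
    then obtain d where d: "d > 0" "\<And>x c. x - c *\<^sub>R b \<in> span B \<Longrightarrow> \<bar>c\<bar> * d \<le> norm x"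
      using coefficient_bound_outside_closed_subspace[OF subspace_span _ False] by blast
    define K where "K = (\<lambda>(y, c). y + c *\<^sub>R b) ` ((span B \<inter> cball 0 (r + r / d * norm b)) \<times> {- r / d .. r / d})"
    have "compact K" unfolding K_def
      by (intro compact_continuous_image compact_Times insert.IH compact_Icc)
        (auto intro!: continuous_intros simp: case_prod_beta)
    moreover have "span (insert b B) \<inter> cball 0 r = K \<inter> cball 0 r"
    proof (intro equalityI subsetI)
      fix x assume x: "x \<in> span (insert b B) \<inter> cball 0 r"
      then obtain c where c: "x - c *\<^sub>R b \<in> span B" using span_breakdown_eq[of x b B] by blast
      have "\<bar>c\<bar> \<le> r / d" using d(2)[OF c] x d(1) by (simp add: field_simps)
      moreover have "norm (x - c *\<^sub>R b) \<le> norm x + \<bar>c\<bar> * norm b"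
        using norm_triangle_ineq4[of x "c *\<^sub>R b"] by simp
      moreover have "\<bar>c\<bar> * norm b \<le> r / d * norm b"
        using \<open>\<bar>c\<bar> \<le> r / d\<close> by (rule mult_right_mono) simp
      ultimately show "x \<in> K \<inter> cball 0 r"
        using x c d(1) unfolding K_def by (auto intro!: image_eqI[of _ _ "(x - c *\<^sub>R b, c)"])
    next
      fix x assume "x \<in> K \<inter> cball 0 r"
      then show "x \<in> span (insert b B) \<inter> cball 0 r" unfolding K_def
        by (auto intro: span_add span_scale span_base span_mono[THEN subsetD, of B])
    qed
    ultimately show ?thesis by (simp add: compact_Int_closed)
  qed
qed (simp add: finite_imp_compact)

lemma linear_bounded_on_span:
  fixes B :: "'v::real_normed_vector set" and f :: "'v \<Rightarrow> 'w::real_normed_vector"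
  assumes "finite B" "linear f"
  obtains K where "0 \<le> K" "\<And>x. x \<in> span B \<Longrightarrow> norm (f x) \<le> K * norm x"
  using assms(1)
proof (induction B arbitrary: thesis rule: finite_induct)
  case empty
  then show ?case using \<open>linear f\<close> by (auto simp: linear_0)
next
  case (insert b B)
  obtain K where K: "0 \<le> K" "\<And>x. x \<in> span B \<Longrightarrow> norm (f x) \<le> K * norm x"
    using insert.IH by blast
  show ?case
  proof (cases "b \<in> span B")
    case True
    then have "span (insert b B) = span B" by (rule span_redundant)
    then show ?thesis using K insert.prems[of K] by simp
  next
    case False
    have "closed (span B)" by (rule closed_if_compact_Int_cball[OF compact_span_Int_cball[OF insert.hyps(1)]])
    then obtain d where d: "d > 0" "\<And>x c. x - c *\<^sub>R b \<in> span B \<Longrightarrow> \<bar>c\<bar> * d \<le> norm x"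
      using coefficient_bound_outside_closed_subspace[OF subspace_span _ False] by blast
    have "norm (f x) \<le> (K + (K * norm b + norm (f b)) / d) * norm x" if x: "x \<in> span (insert b B)" for x
    proof -
      obtain c where c: "x - c *\<^sub>R b \<in> span B" using x span_breakdown_eq[of x b B] by blast
      have c_le: "\<bar>c\<bar> \<le> norm x / d" using d c by (simp add: field_simps)
      have "f x = f (x - c *\<^sub>R b) + c *\<^sub>R f b" using \<open>linear f\<close> by (simp add: linear_diff linear_scale)
      then have "norm (f x) \<le> norm (f (x - c *\<^sub>R b)) + \<bar>c\<bar> * norm (f b)"
        by (metis norm_scaleR norm_triangle_ineq)
      also have "\<dots> \<le> K * norm (x - c *\<^sub>R b) + \<bar>c\<bar> * norm (f b)"
        using K(2)[OF c] by simp
      also have "\<dots> \<le> K * (norm x + \<bar>c\<bar> * norm b) + \<bar>c\<bar> * norm (f b)"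
        using norm_triangle_ineq4[of x "c *\<^sub>R b"] K(1) by (intro add_right_mono mult_left_mono) auto
      also have "\<dots> = K * norm x + \<bar>c\<bar> * (K * norm b + norm (f b))" by (simp add: algebra_simps)
      also have "\<dots> \<le> K * norm x + norm x / d * (K * norm b + norm (f b))"
        using c_le K(1) by (intro add_left_mono mult_right_mono) auto
      finally show ?thesis by (simp add: field_simps)
    qed
    moreover have "0 \<le> K + (K * norm b + norm (f b)) / d" using K(1) d(1) by simp
    ultimately show ?thesis using insert.prems by blast
  qed
qed

lemma fin_dim_space_basis:
  assumes "fin_dim_space TYPE('v::real_normed_vector)"
  obtains B :: "'v::real_normed_vector set" where "finite B" "independent B" "span B = UNIV"
proof -
  obtain C :: "'v set" where C: "finite C" "span C = UNIV"
    using assms unfolding fin_dim_space_def by blast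
  obtain B :: "'v set" where B: "UNIV \<subseteq> span B" "independent B"
    by (rule basis_exists[of UNIV])
  have "finite B" using independent_span_bound[OF C(1) B(2)] C(2) by simp
  then show thesis using B by (intro that) auto
qed

lemma fin_dim_space_independent_bound:
  assumes "fin_dim_space TYPE('v::real_normed_vector)" "independent (A :: 'v set)"
  shows "finite A" "card A \<le> dim (UNIV :: 'v set)"
proof -
  obtain B :: "'v set" where B: "finite B" "independent B" "span B = UNIV"
    using assms(1) by (rule fin_dim_space_basis)
  have "card B = dim (UNIV :: 'v set)" using B by (simp add: basis_card_eq_dim)
  then show "finite A" "card A \<le> dim (UNIV :: 'v set)"
    using independent_span_bound[OF B(1) assms(2)] B(3) by auto
qed

lemma fin_dim_space_compact_cball:
  assumes "fin_dim_space TYPE('v::real_normed_vector)"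
  shows "compact (cball (0::'v) r)"
proof -
  obtain B :: "'v set" where "finite B" "span B = UNIV"
    using assms unfolding fin_dim_space_def by blast
  then show ?thesis using compact_span_Int_cball[of B r] by simp
qed

lemma fin_dim_space_compact_sphere:
  assumes "fin_dim_space TYPE('v::real_normed_vector)"
  shows "compact (sphere (0::'v) r)"
proof -
  have "sphere (0::'v) r = cball 0 r \<inter> sphere 0 r" by auto
  also have "compact \<dots>"
    using assms by (intro compact_Int_closed fin_dim_space_compact_cball)
      (auto simp: sphere_def intro!: closed_Collect_eq continuous_intros)
  finally show ?thesis .
qed

lemma fin_dim_space_linear_imp_bounded_linear:
  assumes "fin_dim_space TYPE('v::real_normed_vector)" "linear (f :: 'v \<Rightarrow> 'w::real_normed_vector)"
  shows "bounded_linear f"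
proof -
  obtain B :: "'v set" where "finite B" "span B = UNIV"
    using assms(1) unfolding fin_dim_space_def by blast
  then obtain K where "\<And>x. norm (f x) \<le> K * norm x"
    using linear_bounded_on_span[OF _ assms(2)] by (metis UNIV_I)
  then show ?thesis
    using assms(2) by (intro bounded_linear_intro[where K = K]) (auto simp: linear_add linear_scale mult.commute)
qed

section \<open>Hahn-Banach theorem in finite dimensions\<close>

definition linear_on :: "'v::real_vector set \<Rightarrow> ('v \<Rightarrow> real) \<Rightarrow> bool" where
  "linear_on V g \<longleftrightarrow> (\<forall>x\<in>V. \<forall>y\<in>V. g (x + y) = g x + g y) \<and> (\<forall>x\<in>V. \<forall>c. g (c *\<^sub>R x) = c * g x)"

lemma span_insert_coeff_unique:
  fixes v :: "'v::real_vector"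
  assumes "v \<notin> span B" "x - a *\<^sub>R v \<in> span B" "x - a' *\<^sub>R v \<in> span B"
  shows "a = a'"
proof (rule ccontr)
  assume "a \<noteq> a'"
  have "(x - a' *\<^sub>R v) - (x - a *\<^sub>R v) \<in> span B" using assms(3,2) by (rule span_diff)
  then have "(a - a') *\<^sub>R v \<in> span B" by (simp add: algebra_simps)
  then have "inverse (a - a') *\<^sub>R ((a - a') *\<^sub>R v) \<in> span B" by (rule span_scale)
  then show False using assms(1) \<open>a \<noteq> a'\<close> by simp
qed

lemma linear_on_extend_span_insert:
  fixes B :: "'v::real_vector set"
  assumes lin: "linear_on (span B) g" and v: "v \<notin> span B"
  obtains g' where "linear_on (span (insert v B)) g'"
    "\<And>m \<alpha>. m \<in> span B \<Longrightarrow> g' (m + \<alpha> *\<^sub>R v) = g m + \<alpha> * c"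
proof -
  define a where "a x = (SOME a. x - a *\<^sub>R v \<in> span B)" for x
  define g' where "g' x = g (x - a x *\<^sub>R v) + a x * c" for x
  have g'_eq: "g' (m + \<alpha> *\<^sub>R v) = g m + \<alpha> * c" if m: "m \<in> span B" for m \<alpha>
  proof -
    have "m + \<alpha> *\<^sub>R v - \<alpha> *\<^sub>R v \<in> span B" using m by simp
    then have "m + \<alpha> *\<^sub>R v - a (m + \<alpha> *\<^sub>R v) *\<^sub>R v \<in> span B"
      unfolding a_def by (rule someI)
    then have "a (m + \<alpha> *\<^sub>R v) = \<alpha>" using m by (intro span_insert_coeff_unique[OF v]) auto
    then show ?thesis unfolding g'_def by simp
  qed
  have decompose: "\<exists>m\<in>span B. \<exists>\<alpha>. x = m + \<alpha> *\<^sub>R v" if "x \<in> span (insert v B)" for x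
    using that span_breakdown_eq[of x v B] by (metis diff_add_cancel)
  have "linear_on (span (insert v B)) g'"
    unfolding linear_on_def
  proof (intro conjI ballI allI)
    fix x y assume "x \<in> span (insert v B)" "y \<in> span (insert v B)"
    then obtain m1 \<alpha>1 m2 \<alpha>2 where m: "m1 \<in> span B" "m2 \<in> span B"
      and xy: "x = m1 + \<alpha>1 *\<^sub>R v" "y = m2 + \<alpha>2 *\<^sub>R v"
      using decompose by metis
    have "x + y = (m1 + m2) + (\<alpha>1 + \<alpha>2) *\<^sub>R v" unfolding xy by (simp add: algebra_simps)
    then have "g' (x + y) = g (m1 + m2) + (\<alpha>1 + \<alpha>2) * c" using m by (simp add: g'_eq span_add)
    then show "g' (x + y) = g' x + g' y"
      using lin m unfolding xy by (simp add: g'_eq linear_on_def algebra_simps)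
  next
    fix x r assume "x \<in> span (insert v B)"
    then obtain m \<alpha> where m: "m \<in> span B" and x: "x = m + \<alpha> *\<^sub>R v" using decompose by metis
    have "r *\<^sub>R x = r *\<^sub>R m + (r * \<alpha>) *\<^sub>R v" unfolding x by (simp add: algebra_simps)
    then have "g' (r *\<^sub>R x) = g (r *\<^sub>R m) + (r * \<alpha>) * c" using m by (simp add: g'_eq span_scale)
    then show "g' (r *\<^sub>R x) = r * g' x"
      using lin m unfolding x by (simp add: g'_eq linear_on_def algebra_simps)
  qed
  then show thesis using that g'_eq by blast
qed

lemma dominated_extension_bound:
  fixes B :: "'v::real_normed_vector set"
  assumes lin: "linear_on (span B) g" and dom: "\<forall>m\<in>span B. g m \<le> norm m"
    and below: "\<forall>m\<in>span B. g m - norm (m - v) \<le> c" and above: "\<forall>m\<in>span B. c \<le> norm (m + v) - g m"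
    and m: "m \<in> span B"
  shows "g m + \<alpha> * c \<le> norm (m + \<alpha> *\<^sub>R v)"
proof -
  have scale: "g (r *\<^sub>R m) = r * g m" for r using lin m unfolding linear_on_def by blast
  consider "\<alpha> > 0" | "\<alpha> < 0" | "\<alpha> = 0" by linarith
  then show ?thesis
  proof cases
    case 1
    have "c \<le> norm (inverse \<alpha> *\<^sub>R m + v) - g (inverse \<alpha> *\<^sub>R m)" using above span_scale[OF m] by blast
    also have "inverse \<alpha> *\<^sub>R m + v = inverse \<alpha> *\<^sub>R (m + \<alpha> *\<^sub>R v)" using 1 by (simp add: algebra_simps)
    finally have "c \<le> inverse \<alpha> * (norm (m + \<alpha> *\<^sub>R v) - g m)"
      using 1 by (simp add: scale right_diff_distrib)
    then show ?thesis using 1 by (simp add: field_simps)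
  next
    case 2
    have "g (inverse (- \<alpha>) *\<^sub>R m) - norm (inverse (- \<alpha>) *\<^sub>R m - v) \<le> c" using below span_scale[OF m] by blast
    also have "inverse (- \<alpha>) *\<^sub>R m - v = inverse (- \<alpha>) *\<^sub>R (m + \<alpha> *\<^sub>R v)" using 2 by (simp add: algebra_simps)
    finally have "inverse (- \<alpha>) * (g m - norm (m + \<alpha> *\<^sub>R v)) \<le> c"
      using 2 by (simp only: scale norm_scaleR right_diff_distrib) simp
    then show ?thesis using 2 by (simp add: field_simps)
  next
    case 3
    then show ?thesis using dom m by simp
  qed
qed

lemma dominated_extension_value_exists:
  fixes B :: "'v::real_normed_vector set"
  assumes lin: "linear_on (span B) g" and dom: "\<forall>m\<in>span B. g m \<le> norm m"
  obtains c where "\<forall>m\<in>span B. g m - norm (m - v) \<le> c" "\<forall>m\<in>span B. c \<le> norm (m + v) - g m"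
proof -
  have sandwich: "g m1 - norm (m1 - v) \<le> norm (m2 + v) - g m2" if "m1 \<in> span B" "m2 \<in> span B" for m1 m2
  proof -
    have "g m1 + g m2 = g (m1 + m2)" using lin that unfolding linear_on_def by simp
    also have "\<dots> \<le> norm ((m1 - v) + (m2 + v))" using dom span_add[OF that] by simp
    also have "\<dots> \<le> norm (m1 - v) + norm (m2 + v)" by (rule norm_triangle_ineq)
    finally show ?thesis by simp
  qed
  define L where "L = (\<lambda>m. g m - norm (m - v)) ` span B"
  have "L \<noteq> {}" "bdd_above L" unfolding L_def bdd_above_def using sandwich span_zero by blast+
  then show thesis
    by (intro that[of "Sup L"] ballI cSup_upper cSup_least) (auto simp: L_def sandwich)
qed

lemma exists_norming_linear_on_span_singleton:
  fixes u :: "'v::real_normed_vector"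
  assumes "u \<noteq> 0"
  obtains g where "linear_on (span {u}) g" "g u = norm u" "\<forall>x\<in>span {u}. g x \<le> norm x"
proof -
  have "linear_on (span {}) (\<lambda>_. 0)" by (simp add: linear_on_def)
  then obtain g where g: "linear_on (span {u}) g"
    "\<And>m \<alpha>. m \<in> span {} \<Longrightarrow> g (m + \<alpha> *\<^sub>R u) = 0 + \<alpha> * norm u"
    using linear_on_extend_span_insert[where B = "{}" and g = "\<lambda>_. 0" and v = u and c = "norm u"] assms
    by auto
  then have g_scale: "g (\<alpha> *\<^sub>R u) = \<alpha> * norm u" for \<alpha> using g(2)[of 0 \<alpha>] by simp
  have "\<forall>x\<in>span {u}. g x \<le> norm x"
  proof
    fix x assume "x \<in> span {u}"
    then obtain \<alpha> where "x = \<alpha> *\<^sub>R u" by (auto simp: span_singleton)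
    then show "g x \<le> norm x" by (simp add: g_scale mult_right_mono)
  qed
  then show thesis using that g(1) g_scale[of 1] by simp
qed

lemma exists_norming_linear_on_span:
  fixes B :: "'v::real_normed_vector set"
  assumes "finite B" "u \<noteq> 0"
  obtains g where "linear_on (span (insert u B)) g" "g u = norm u"
    "\<forall>x\<in>span (insert u B). g x \<le> norm x"
  using assms(1)
proof (induction B arbitrary: thesis rule: finite_induct)
  case empty
  then show ?case using exists_norming_linear_on_span_singleton[OF assms(2)] by blast
next
  case (insert b B)
  obtain g where g: "linear_on (span (insert u B)) g" "g u = norm u" "\<forall>x\<in>span (insert u B). g x \<le> norm x"
    using insert.IH by blast
  show ?case
  proof (cases "b \<in> span (insert u B)")
    case True
    have "insert u (insert b B) = insert b (insert u B)" by blast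
    then have "span (insert u (insert b B)) = span (insert u B)"
      using span_redundant[OF True] by simp
    then show ?thesis using insert.prems g by simp
  next
    case False
    obtain c where c: "\<forall>m\<in>span (insert u B). g m - norm (m - b) \<le> c"
      "\<forall>m\<in>span (insert u B). c \<le> norm (m + b) - g m"
      using dominated_extension_value_exists[OF g(1,3)] by blast
    obtain g' where g': "linear_on (span (insert b (insert u B))) g'"
      "\<And>m \<alpha>. m \<in> span (insert u B) \<Longrightarrow> g' (m + \<alpha> *\<^sub>R b) = g m + \<alpha> * c"
      using linear_on_extend_span_insert[OF g(1) False] by blast
    have "insert b (insert u B) = insert u (insert b B)" by blast
    then have span_eq: "span (insert b (insert u B)) = span (insert u (insert b B))" by simp
    have u: "g' u = norm u" using g'(2)[of u 0] g(2) by (simp add: span_base)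
    have "\<forall>x\<in>span (insert b (insert u B)). g' x \<le> norm x"
    proof
      fix x assume "x \<in> span (insert b (insert u B))"
      then obtain \<alpha> where "x - \<alpha> *\<^sub>R b \<in> span (insert u B)"
        using span_breakdown_eq[of x b "insert u B"] by blast
      then show "g' x \<le> norm x"
        using dominated_extension_bound[OF g(1,3) c, of "x - \<alpha> *\<^sub>R b" \<alpha>] g'(2)[of "x - \<alpha> *\<^sub>R b" \<alpha>]
        by simp
    qed
    then show ?thesis using g'(1) u unfolding span_eq by (intro insert.prems)
  qed
qed

lemma exists_norming_functional:
  fixes u :: "'v::real_normed_vector"
  assumes "fin_dim_space TYPE('v)" "u \<noteq> 0"
  obtains g :: "'v \<Rightarrow>\<^sub>L real" where "norm g = 1" "blinfun_apply g u = norm u"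
proof -
  obtain B :: "'v set" where B: "finite B" "span B = UNIV"
    using assms(1) unfolding fin_dim_space_def by blast
  then have UNIV: "span (insert u B) = UNIV" using span_mono[of B "insert u B"] by auto
  obtain g where g: "linear_on UNIV g" "g u = norm u" "\<forall>x\<in>UNIV. g x \<le> norm x"
    by (rule exists_norming_linear_on_span[OF B(1) assms(2), unfolded UNIV])
  have add: "g (x + y) = g x + g y" and scale: "g (r *\<^sub>R x) = r * g x" for x y r
    using g(1) by (simp_all add: linear_on_def)
  have abs_le: "\<bar>g x\<bar> \<le> norm x" for x
  proof -
    have "g (- x) \<le> norm (- x)" "g x \<le> norm x" using g(3) by blast+
    then show ?thesis using scale[of "- 1" x] by (simp add: abs_le_iff)
  qed
  have "bounded_linear g"
    using add scale abs_le by (intro bounded_linear_intro[where K = 1]) auto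
  then have G: "blinfun_apply (Blinfun g) = g" by (rule bounded_linear_Blinfun_apply)
  have "norm (Blinfun g) \<le> 1" by (rule norm_blinfun_bound) (simp_all add: G abs_le)
  moreover have "norm u \<le> norm (Blinfun g) * norm u" using norm_blinfun[of "Blinfun g" u] g(2) G by simp
  then have "1 \<le> norm (Blinfun g)" using assms(2) by simp
  ultimately have "norm (Blinfun g) = 1" by simp
  then show thesis using that[of "Blinfun g"] G g(2) by simp
qed

section \<open>Dual spaces\<close>

lemma functional_in_span_if_common_kernel:
  fixes E :: "('v::real_normed_vector \<Rightarrow>\<^sub>L real) set"
  assumes "finite E" "\<And>x. \<forall>e\<in>E. blinfun_apply e x = 0 \<Longrightarrow> blinfun_apply f x = 0"
  shows "f \<in> span E"
  using assms
proof (induction E arbitrary: f rule: finite_induct)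
  case empty
  then have "f = 0" by (intro blinfun_eqI) simp
  then show ?case by simp
next
  case (insert e E)
  show ?case
  proof (cases "\<forall>x. (\<forall>e'\<in>E. blinfun_apply e' x = 0) \<longrightarrow> blinfun_apply e x = 0")
    case True
    then have "f \<in> span E" using insert.prems by (intro insert.IH) auto
    then show ?thesis using span_mono[of E "insert e E"] by blast
  next
    case False
    then obtain z0 where z0: "\<forall>e'\<in>E. blinfun_apply e' z0 = 0" "blinfun_apply e z0 \<noteq> 0" by blast
    define z where "z = z0 /\<^sub>R blinfun_apply e z0"
    have z: "\<forall>e'\<in>E. blinfun_apply e' z = 0" "blinfun_apply e z = 1"
      using z0 by (simp_all add: z_def blinfun.scaleR_right)
    define h where "h = f - blinfun_apply f z *\<^sub>R e"
    have "blinfun_apply h x = 0" if x: "\<forall>e'\<in>E. blinfun_apply e' x = 0" for x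
    proof -
      have "\<forall>e'\<in>insert e E. blinfun_apply e' (x - blinfun_apply e x *\<^sub>R z) = 0"
        using x z by (auto simp: blinfun.diff_right blinfun.scaleR_right)
      then have "blinfun_apply f (x - blinfun_apply e x *\<^sub>R z) = 0" by (rule insert.prems)
      then show ?thesis
        unfolding h_def by (simp add: blinfun.diff_right blinfun.scaleR_right blinfun.diff_left blinfun.scaleR_left)
    qed
    then have "h \<in> span E" by (rule insert.IH)
    then have "h \<in> span (insert e E)" using span_mono[of E "insert e E"] by blast
    moreover have "blinfun_apply f z *\<^sub>R e \<in> span (insert e E)" by (simp add: span_base span_scale)
    ultimately have "h + blinfun_apply f z *\<^sub>R e \<in> span (insert e E)" by (rule span_add)
    then show ?thesis unfolding h_def by simp
  qed
qed

lemma independent_functionals_dual_vector: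
  fixes G :: "('v::real_normed_vector \<Rightarrow>\<^sub>L real) set"
  assumes "finite G" "independent G" "g \<in> G"
  obtains y where "blinfun_apply g y = 1" "\<forall>g'\<in>G - {g}. blinfun_apply g' y = 0"
proof -
  have "g \<notin> span (G - {g})" using assms(2,3) dependent_def by blast
  then obtain x where x: "\<forall>e\<in>G - {g}. blinfun_apply e x = 0" "blinfun_apply g x \<noteq> 0"
    using functional_in_span_if_common_kernel[of "G - {g}" g] assms(1) by blast
  show thesis
    by (rule that[of "x /\<^sub>R blinfun_apply g x"]) (use x in \<open>auto simp: blinfun.scaleR_right\<close>)
qed

lemma fin_dim_space_dual:
  assumes "fin_dim_space TYPE('v::real_normed_vector)"
  shows "fin_dim_space TYPE('v \<Rightarrow>\<^sub>L real)" "dim (UNIV :: ('v \<Rightarrow>\<^sub>L real) set) \<le> dim (UNIV :: 'v set)"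
proof -
  obtain B :: "'v set" where B: "finite B" "independent B" "span B = UNIV"
    using assms by (rule fin_dim_space_basis)
  have "\<forall>b. \<exists>h. linear h \<and> (\<forall>x\<in>B. h x = (if x = b then 1 else (0::real)))"
    using linear_independent_extend[OF B(2)] by (intro allI)
  then obtain h :: "'v \<Rightarrow> 'v \<Rightarrow> real" where "\<forall>b. linear (h b) \<and> (\<forall>x\<in>B. h b x = (if x = b then 1 else 0))"
    by (rule choice[THEN exE])
  then have h: "\<And>b. linear (h b)" "\<And>b x. x \<in> B \<Longrightarrow> h b x = (if x = b then 1 else 0)"
    by simp_all
  define e where "e b = Blinfun (h b)" for b
  have e: "blinfun_apply (e b) = h b" for b
    unfolding e_def using fin_dim_space_linear_imp_bounded_linear[OF assms h(1)]
    by (rule bounded_linear_Blinfun_apply)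
  have "f = (\<Sum>b\<in>B. blinfun_apply f b *\<^sub>R e b)" for f :: "'v \<Rightarrow>\<^sub>L real"
  proof (rule blinfun_eqI)
    fix x :: 'v
    have "x \<in> span B" using B(3) by simp
    show "blinfun_apply f x = blinfun_apply (\<Sum>b\<in>B. blinfun_apply f b *\<^sub>R e b) x"
    proof (rule linear_eq_on_span[OF _ _ _ \<open>x \<in> span B\<close>])
      fix b' assume "b' \<in> B"
      then have "(\<Sum>b\<in>B. blinfun_apply f b * h b b') = blinfun_apply f b'"
        using B(1) by (simp add: h(2) if_distrib cong: if_cong)
      then show "blinfun_apply f b' = blinfun_apply (\<Sum>b\<in>B. blinfun_apply f b *\<^sub>R e b) b'"
        by (simp add: blinfun.sum_left blinfun.scaleR_left e)
    qed (intro bounded_linear.linear blinfun.bounded_linear_right)+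
  qed
  then have "f \<in> span (e ` B)" for f
    by (metis (no_types, lifting) image_eqI span_base span_scale span_sum)
  then have span: "span (e ` B) = UNIV" by auto
  then show "fin_dim_space TYPE('v \<Rightarrow>\<^sub>L real)"
    unfolding fin_dim_space_def using B(1) by blast
  have "dim (UNIV :: ('v \<Rightarrow>\<^sub>L real) set) \<le> card (e ` B)"
    using span B(1) by (intro dim_le_card) auto
  also have "\<dots> \<le> card B" using B(1) by (rule card_image_le)
  also have "\<dots> = dim (UNIV :: 'v set)" using B by (simp add: basis_card_eq_dim)
  finally show "dim (UNIV :: ('v \<Rightarrow>\<^sub>L real) set) \<le> dim (UNIV :: 'v set)" .
qed

lemma J_set_nonempty:
  assumes "fin_dim_space TYPE('z::real_normed_vector)" "norm (z::'z) = 1"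
  shows "J_set z \<noteq> {}"
proof -
  obtain g :: "'z \<Rightarrow>\<^sub>L real" where "norm g = 1" "blinfun_apply g z = norm z"
    by (rule exists_norming_functional[OF assms(1), of z]) (use assms(2) in auto)
  then show ?thesis using assms(2) unfolding J_set_def by auto
qed

lemma blinfun_apply_le_norm:
  fixes g :: "'v::real_normed_vector \<Rightarrow>\<^sub>L real"
  shows "blinfun_apply g v \<le> norm g * norm v"
  using norm_blinfun[of g v] by simp

section \<open>Perturbing an operator of norm one\<close>

lemma norm_blinfun_gt_imp_unit_vector:
  fixes A :: "'a::real_normed_vector \<Rightarrow>\<^sub>L 'b::real_normed_vector"
  assumes "c < norm A" "0 \<le> c"
  obtains x where "norm x = 1" "c < norm (blinfun_apply A x)"
proof -
  have "\<exists>x. norm x = 1 \<and> c < norm (blinfun_apply A x)"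
  proof (rule ccontr)
    assume small: "\<nexists>x. norm x = 1 \<and> c < norm (blinfun_apply A x)"
    have "norm (blinfun_apply A x) \<le> c * norm x" for x
    proof (cases "x = 0")
      case False
      then have "norm (x /\<^sub>R norm x) = 1" by simp
      then have "\<not> c < norm (blinfun_apply A (x /\<^sub>R norm x))" using small by blast
      then show ?thesis using False by (simp add: blinfun.scaleR_right field_simps)
    qed simp
    then have "norm A \<le> c" using assms(2) by (rule norm_blinfun_bound[rotated])
    then show False using assms(1) by simp
  qed
  then show thesis using that by blast
qed

lemma perturbed_norming_pair:
  fixes T S :: "'a::real_normed_vector \<Rightarrow>\<^sub>L 'b::real_normed_vector"
    and f :: "('a \<Rightarrow>\<^sub>L 'b) \<Rightarrow>\<^sub>L real"
  assumes fin: "fin_dim_space TYPE('b)" and T: "norm T = 1" and f: "f \<in> J_set T"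
    and fS: "0 < blinfun_apply f S" and t: "0 < t"
  obtains x and g :: "'b \<Rightarrow>\<^sub>L real" where "norm x = 1" "norm g = 1"
    "1 < blinfun_apply g (blinfun_apply T x + t *\<^sub>R blinfun_apply S x)"
    "blinfun_apply f S / 2 < blinfun_apply g (blinfun_apply S x)"
proof -
  define \<epsilon> where "\<epsilon> = blinfun_apply f S / 2"
  have "t * \<epsilon> < t * blinfun_apply f S" using fS t by (simp add: \<epsilon>_def)
  then have "1 + t * \<epsilon> < blinfun_apply f (T + t *\<^sub>R S)"
    using f by (simp add: J_set_def blinfun.add_right blinfun.scaleR_right)
  also have "\<dots> \<le> norm (T + t *\<^sub>R S)"
    using blinfun_apply_le_norm[of f] f by (simp add: J_set_def)
  finally obtain x where x: "norm x = 1" "1 + t * \<epsilon> < norm (blinfun_apply (T + t *\<^sub>R S) x)"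
    using fS t by (elim norm_blinfun_gt_imp_unit_vector) (simp_all add: \<epsilon>_def)
  define u where "u = blinfun_apply T x + t *\<^sub>R blinfun_apply S x"
  have u: "1 + t * \<epsilon> < norm u"
    using x(2) by (simp add: u_def blinfun.add_left blinfun.scaleR_left)
  have "0 \<le> t * \<epsilon>" using fS t by (simp add: \<epsilon>_def)
  then have "u \<noteq> 0" using u by auto
  then obtain g :: "'b \<Rightarrow>\<^sub>L real" where g: "norm g = 1" "blinfun_apply g u = norm u"
    using exists_norming_functional[OF fin] by blast
  have "blinfun_apply g (blinfun_apply T x) \<le> norm (blinfun_apply T x)"
    using blinfun_apply_le_norm[of g] g(1) by simp
  also have "\<dots> \<le> 1" using norm_blinfun[of T x] T x(1) by simp
  finally have "t * \<epsilon> < t * blinfun_apply g (blinfun_apply S x)"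
    using u g(2) by (simp add: u_def blinfun.add_right blinfun.scaleR_right)
  then have "\<epsilon> < blinfun_apply g (blinfun_apply S x)" using t by simp
  then show thesis using that x(1) g u \<open>0 \<le> t * \<epsilon>\<close> unfolding u_def \<epsilon>_def by simp
qed

lemma limit_of_perturbed_norming_pairs:
  fixes T S :: "'a::real_normed_vector \<Rightarrow>\<^sub>L 'b::real_normed_vector"
    and x :: "nat \<Rightarrow> 'a" and g :: "nat \<Rightarrow> 'b \<Rightarrow>\<^sub>L real"
  assumes fin_a: "fin_dim_space TYPE('a)" and fin_b: "fin_dim_space TYPE('b)" and T: "norm T = 1"
    and unit: "\<And>k. norm (x k) = 1" "\<And>k. norm (g k) = 1" and t: "t \<longlonglongrightarrow> 0"
    and big: "\<And>k. 1 < blinfun_apply (g k) (blinfun_apply T (x k) + t k *\<^sub>R blinfun_apply S (x k))"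
    and pos: "\<And>k. c < blinfun_apply (g k) (blinfun_apply S (x k))"
  obtains x0 g0 where "x0 \<in> M_op T" "g0 \<in> J_set (blinfun_apply T x0)"
    "c \<le> blinfun_apply g0 (blinfun_apply S x0)"
proof -
  have "compact (sphere (0::'a) 1 \<times> sphere (0::'b \<Rightarrow>\<^sub>L real) 1)"
    by (intro compact_Times fin_dim_space_compact_sphere fin_a fin_dim_space_dual(1) fin_b)
  moreover have "\<forall>k. (x k, g k) \<in> sphere 0 1 \<times> sphere 0 1" using unit by simp
  ultimately obtain l r where l: "l \<in> sphere 0 1 \<times> sphere 0 1"
    and r: "strict_mono r" "((\<lambda>k. (x k, g k)) \<circ> r) \<longlonglongrightarrow> l"
    by (rule seq_compactE[OF compact_imp_seq_compact])
  obtain x0 g0 where l_eq: "l = (x0, g0)" by fastforce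
  have x0: "(\<lambda>k. x (r k)) \<longlonglongrightarrow> x0" and g0: "(\<lambda>k. g (r k)) \<longlonglongrightarrow> g0"
    using tendsto_fst[OF r(2)] tendsto_snd[OF r(2)] by (simp_all add: l_eq o_def)
  have "(\<lambda>k. t (r k)) \<longlonglongrightarrow> 0" using LIMSEQ_subseq_LIMSEQ[OF t r(1)] by (simp add: o_def)
  then have "(\<lambda>k. blinfun_apply (g (r k)) (blinfun_apply T (x (r k)) + t (r k) *\<^sub>R blinfun_apply S (x (r k))))
      \<longlonglongrightarrow> blinfun_apply g0 (blinfun_apply T x0 + 0 *\<^sub>R blinfun_apply S x0)"
    using x0 g0 by (intro tendsto_intros)
  then have g0_Tx0: "1 \<le> blinfun_apply g0 (blinfun_apply T x0)"
    using big by (intro LIMSEQ_le_const) (auto intro: less_imp_le)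
  have "(\<lambda>k. blinfun_apply (g (r k)) (blinfun_apply S (x (r k)))) \<longlonglongrightarrow> blinfun_apply g0 (blinfun_apply S x0)"
    using x0 g0 by (intro tendsto_intros)
  then have "c \<le> blinfun_apply g0 (blinfun_apply S x0)"
    using pos by (intro LIMSEQ_le_const) (auto intro: less_imp_le)
  moreover have norms: "norm x0 = 1" "norm g0 = 1" using l by (simp_all add: l_eq)
  have "blinfun_apply g0 (blinfun_apply T x0) \<le> norm (blinfun_apply T x0)"
    using blinfun_apply_le_norm[of g0] norms by simp
  moreover have "norm (blinfun_apply T x0) \<le> 1" using norm_blinfun[of T x0] T norms by simp
  ultimately show thesis
    using g0_Tx0 norms T by (intro that) (auto simp: M_op_def J_set_def)
qed

lemma exists_attaining_pair_positive_on_direction: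
  fixes T S :: "'a::real_normed_vector \<Rightarrow>\<^sub>L 'b::real_normed_vector"
    and f :: "('a \<Rightarrow>\<^sub>L 'b) \<Rightarrow>\<^sub>L real"
  assumes fin_a: "fin_dim_space TYPE('a)" and fin_b: "fin_dim_space TYPE('b)"
    and T: "norm T = 1" and f: "f \<in> J_set T" and fS: "0 < blinfun_apply f S"
  obtains x g where "x \<in> M_op T" "g \<in> J_set (blinfun_apply T x)"
    "blinfun_apply f S / 2 \<le> blinfun_apply g (blinfun_apply S x)"
proof -
  define t where "t k = inverse (real (Suc k))" for k
  have "\<forall>k. \<exists>p :: 'a \<times> ('b \<Rightarrow>\<^sub>L real). norm (fst p) = 1 \<and> norm (snd p) = 1 \<and>
      1 < blinfun_apply (snd p) (blinfun_apply T (fst p) + t k *\<^sub>R blinfun_apply S (fst p)) \<and>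
      blinfun_apply f S / 2 < blinfun_apply (snd p) (blinfun_apply S (fst p))"
  proof
    fix k
    have "0 < t k" by (simp add: t_def)
    then obtain x and g :: "'b \<Rightarrow>\<^sub>L real" where "norm x = 1" "norm g = 1"
      "1 < blinfun_apply g (blinfun_apply T x + t k *\<^sub>R blinfun_apply S x)"
      "blinfun_apply f S / 2 < blinfun_apply g (blinfun_apply S x)"
      using perturbed_norming_pair[OF fin_b T f fS] by blast
    then show "\<exists>p. norm (fst p) = 1 \<and> norm (snd p) = 1 \<and>
      1 < blinfun_apply (snd p) (blinfun_apply T (fst p) + t k *\<^sub>R blinfun_apply S (fst p)) \<and>
      blinfun_apply f S / 2 < blinfun_apply (snd p) (blinfun_apply S (fst p))"
      by (intro exI[of _ "(x, g)"]) simp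
  qed
  then obtain p :: "nat \<Rightarrow> 'a \<times> ('b \<Rightarrow>\<^sub>L real)" where p: "\<And>k. norm (fst (p k)) = 1" "\<And>k. norm (snd (p k)) = 1"
    "\<And>k. 1 < blinfun_apply (snd (p k)) (blinfun_apply T (fst (p k)) + t k *\<^sub>R blinfun_apply S (fst (p k)))"
    "\<And>k. blinfun_apply f S / 2 < blinfun_apply (snd (p k)) (blinfun_apply S (fst (p k)))"
    by metis
  have "t \<longlonglongrightarrow> 0" unfolding t_def by (rule LIMSEQ_inverse_real_of_nat)
  then show thesis
    using limit_of_perturbed_norming_pairs[where x = "\<lambda>k. fst (p k)" and g = "\<lambda>k. snd (p k)" and t = t,
        OF fin_a fin_b T p(1,2) _ p(3,4)] that
    by blast
qed

lemma J_set_nonpos_if_vanishing_on_face: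
  fixes T S :: "'a::real_normed_vector \<Rightarrow>\<^sub>L 'b::real_normed_vector"
    and f :: "('a \<Rightarrow>\<^sub>L 'b) \<Rightarrow>\<^sub>L real"
  assumes "fin_dim_space TYPE('a)" "fin_dim_space TYPE('b)" "norm T = 1"
    and M: "M_op T = F \<union> uminus ` F" and TF: "\<forall>x\<in>F. blinfun_apply T x = y"
    and f: "f \<in> J_set T"
    and S: "\<forall>x\<in>F. \<forall>g\<in>J_set y. blinfun_apply g (blinfun_apply S x) = 0"
  shows "blinfun_apply f S \<le> 0"
proof (rule ccontr)
  assume "\<not> blinfun_apply f S \<le> 0"
  then have fS: "0 < blinfun_apply f S" by simp
  then obtain x g where x: "x \<in> M_op T" and g: "g \<in> J_set (blinfun_apply T x)"
    and ge: "blinfun_apply f S / 2 \<le> blinfun_apply g (blinfun_apply S x)"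
    by (rule exists_attaining_pair_positive_on_direction[OF assms(1-3) f])
  have pos: "0 < blinfun_apply g (blinfun_apply S x)" using fS ge by linarith
  from x M consider "x \<in> F" | z where "z \<in> F" "x = - z" by blast
  then show False
  proof cases
    case 1
    then show False using S TF g pos by fastforce
  next
    case 2
    then have "- g \<in> J_set y" using TF g by (simp add: J_set_def blinfun.minus_right blinfun.minus_left)
    then show False using S 2 pos by (fastforce simp: blinfun.minus_right blinfun.minus_left)
  qed
qed

section \<open>Elementary tensors as functionals on operators\<close>

definition tensor_functional ::
    "'a::real_normed_vector \<Rightarrow> ('b::real_normed_vector \<Rightarrow>\<^sub>L real) \<Rightarrow> ('a \<Rightarrow>\<^sub>L 'b) \<Rightarrow>\<^sub>L real" where
  "tensor_functional x g = Blinfun (\<lambda>S. blinfun_apply g (blinfun_apply S x))"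

lemma tensor_functional_apply [simp]:
  "blinfun_apply (tensor_functional x g) S = blinfun_apply g (blinfun_apply S x)"
proof -
  have "bounded_linear (\<lambda>S::'a \<Rightarrow>\<^sub>L 'b. blinfun_apply g (blinfun_apply S x))"
    by (rule bounded_linear_compose[OF blinfun.bounded_linear_right blinfun.bounded_linear_left])
  then show ?thesis unfolding tensor_functional_def by (simp add: bounded_linear_Blinfun_apply)
qed

lemma norm_tensor_functional_le: "norm (tensor_functional x g) \<le> norm g * norm x"
proof (rule norm_blinfun_bound)
  fix S :: "'a \<Rightarrow>\<^sub>L 'b"
  have "norm (blinfun_apply g (blinfun_apply S x)) \<le> norm g * (norm S * norm x)"
    using norm_blinfun[of g] norm_blinfun[of S x] by (metis mult_left_mono norm_ge_zero order_trans)
  then show "norm (blinfun_apply (tensor_functional x g) S) \<le> norm g * norm x * norm S"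
    by (simp add: ac_simps)
qed simp

lemma independent_if_biorthogonal:
  fixes V :: "'v::real_vector set"
  assumes "finite V"
    and dual: "\<And>v. v \<in> V \<Longrightarrow> \<exists>\<phi>. linear \<phi> \<and> \<phi> v = (1::real) \<and> (\<forall>w\<in>V - {v}. \<phi> w = 0)"
  shows "independent V"
proof (rule independent_if_scalars_zero[OF assms(1)])
  fix c v assume sum: "(\<Sum>w\<in>V. c w *\<^sub>R w) = 0" and v: "v \<in> V"
  obtain \<phi> :: "'v \<Rightarrow> real" where \<phi>: "linear \<phi>" "\<phi> v = 1" "\<forall>w\<in>V - {v}. \<phi> w = 0" using dual[OF v] by blast
  have "0 = \<phi> (\<Sum>w\<in>V. c w *\<^sub>R w)" using sum \<phi>(1) by (simp add: linear_0)
  also have "\<dots> = (\<Sum>w\<in>V. c w * \<phi> w)" using \<phi>(1) by (simp add: linear_sum linear_scale)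
  also have "\<dots> = c v" using \<phi>(2,3) v assms(1) by (simp add: sum.remove)
  finally show "c v = 0" by simp
qed

lemma exists_operator_dual_to_bases:
  fixes X :: "'a::real_normed_vector set" and G :: "('b::real_normed_vector \<Rightarrow>\<^sub>L real) set"
  assumes "fin_dim_space TYPE('a)" "independent X" "finite G" "independent G" "a \<in> X" "b \<in> G"
  obtains S :: "'a \<Rightarrow>\<^sub>L 'b" where
    "\<And>x g. x \<in> X \<Longrightarrow> g \<in> G \<Longrightarrow> blinfun_apply g (blinfun_apply S x) = (if x = a \<and> g = b then 1 else 0)"
proof -
  obtain y where y: "blinfun_apply b y = 1" "\<forall>g\<in>G - {b}. blinfun_apply g y = 0"
    by (rule independent_functionals_dual_vector[OF assms(3,4,6)])
  have "\<exists>L. linear L \<and> (\<forall>x\<in>X. L x = (if x = a then y else 0))"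
    by (rule linear_independent_extend[OF assms(2)])
  then obtain L :: "'a \<Rightarrow> 'b" where L: "linear L" "\<forall>x\<in>X. L x = (if x = a then y else 0)"
    by (elim exE conjE)
  have S: "blinfun_apply (Blinfun L) = L"
    using fin_dim_space_linear_imp_bounded_linear[OF assms(1) L(1)] by (rule bounded_linear_Blinfun_apply)
  show thesis
  proof (rule that)
    fix x g assume "x \<in> X" "g \<in> G"
    then show "blinfun_apply g (blinfun_apply (Blinfun L) x) = (if x = a \<and> g = b then 1 else 0)"
      using L(2) y by (auto simp: S blinfun.zero_right)
  qed
qed

lemma inj_on_tensor_functional:
  fixes X :: "'a::real_normed_vector set" and G :: "('b::real_normed_vector \<Rightarrow>\<^sub>L real) set"
  assumes "fin_dim_space TYPE('a)" "independent X" "finite G" "independent G"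
  shows "inj_on (\<lambda>(x, g). tensor_functional x g) (X \<times> G)"
proof (rule inj_onI, clarify)
  fix a b x g assume ab: "a \<in> X" "b \<in> G" and xg: "x \<in> X" "g \<in> G"
    and eq: "tensor_functional a b = tensor_functional x g"
  obtain S where S: "\<And>x g. x \<in> X \<Longrightarrow> g \<in> G \<Longrightarrow>
      blinfun_apply g (blinfun_apply S x) = (if x = a \<and> g = b then 1 else 0)"
    using exists_operator_dual_to_bases[OF assms ab] by blast
  have "1 = blinfun_apply (tensor_functional a b) S" using S[OF ab] by simp
  also have "\<dots> = blinfun_apply (tensor_functional x g) S" by (simp only: eq)
  also have "\<dots> = (if x = a \<and> g = b then 1 else 0)" using S[OF xg] by simp
  finally show "a = x \<and> b = g" by (simp split: if_splits)
qed

lemma independent_tensor_functionals: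
  fixes X :: "'a::real_normed_vector set" and G :: "('b::real_normed_vector \<Rightarrow>\<^sub>L real) set"
  assumes "fin_dim_space TYPE('a)" "finite X" "independent X" "finite G" "independent G"
  shows "independent ((\<lambda>(x, g). tensor_functional x g) ` (X \<times> G))" (is "independent ?E")
proof (rule independent_if_biorthogonal)
  show "finite ?E" using assms(2,4) by simp
next
  fix e assume "e \<in> ?E"
  then obtain a b where ab: "a \<in> X" "b \<in> G" and e: "e = tensor_functional a b"
    by (auto simp: image_iff)
  obtain S where S: "\<And>x g. x \<in> X \<Longrightarrow> g \<in> G \<Longrightarrow>
      blinfun_apply g (blinfun_apply S x) = (if x = a \<and> g = b then 1 else 0)"
    using exists_operator_dual_to_bases[OF assms(1,3,4,5) ab] by blast
  have "linear (\<lambda>e :: ('a \<Rightarrow>\<^sub>L 'b) \<Rightarrow>\<^sub>L real. blinfun_apply e S)"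
    by (rule bounded_linear.linear[OF blinfun.bounded_linear_left])
  moreover have "blinfun_apply w S = 0" if "w \<in> ?E - {e}" for w
    using that S e by auto
  moreover have "blinfun_apply e S = 1" using S[OF ab] e by simp
  ultimately show "\<exists>\<phi>. linear \<phi> \<and> \<phi> e = (1::real) \<and> (\<forall>w\<in>?E - {e}. \<phi> w = 0)"
    by (intro exI[of _ "\<lambda>e. blinfun_apply e S"]) simp
qed

lemma blinfun_apply_apply_vanishes_on_spans:
  fixes S :: "'a::real_normed_vector \<Rightarrow>\<^sub>L 'b::real_normed_vector"
    and G :: "('b \<Rightarrow>\<^sub>L real) set"
  assumes "\<forall>x\<in>X. \<forall>g\<in>G. blinfun_apply g (blinfun_apply S x) = 0" "x \<in> span X" "g \<in> span G"
  shows "blinfun_apply g (blinfun_apply S x) = 0"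
proof -
  have bil: "bilinear (\<lambda>x (g :: 'b \<Rightarrow>\<^sub>L real). blinfun_apply g (blinfun_apply S x))"
    unfolding bilinear_def
  proof (intro conjI allI)
    show "linear (\<lambda>g :: 'b \<Rightarrow>\<^sub>L real. blinfun_apply g (blinfun_apply S x))" for x
      by (rule bounded_linear.linear[OF blinfun.bounded_linear_left])
    show "linear (\<lambda>x. blinfun_apply g (blinfun_apply S x))" for g :: "'b \<Rightarrow>\<^sub>L real"
      by (rule bounded_linear.linear[OF bounded_linear_compose[OF blinfun.bounded_linear_right blinfun.bounded_linear_right]])
  qed
  have zero: "bilinear (\<lambda>(x::'a) (g::'b \<Rightarrow>\<^sub>L real). 0::real)"
    by (simp add: bilinear_def linear_zero)
  show ?thesis
    using bilinear_eq[OF bil zero order_refl order_refl assms(2,3)] assms(1) by simp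
qed

lemma span_J_set_eq_span_tensor_functionals:
  fixes T :: "'a::real_normed_vector \<Rightarrow>\<^sub>L 'b::real_normed_vector"
  assumes fin: "fin_dim_space TYPE('a)" "fin_dim_space TYPE('b)" and T: "norm T = 1"
    and M: "M_op T = F \<union> uminus ` F" and TF: "\<forall>x\<in>F. blinfun_apply T x = y"
    and X: "finite X" "X \<subseteq> F" "F \<subseteq> span X" and G: "finite G" "G \<subseteq> J_set y" "J_set y \<subseteq> span G"
  shows "span (J_set T) = span ((\<lambda>(x, g). tensor_functional x g) ` (X \<times> G))"
    (is "_ = span ?E")
proof
  have "?E \<subseteq> J_set T"
  proof clarify
    fix x g assume "x \<in> X" "g \<in> G"
    then have x: "norm x = 1" "blinfun_apply T x = y" and g: "norm g = 1" "blinfun_apply g y = 1"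
      using X(2) G(2) TF M by (auto simp: M_op_def J_set_def)
    have "1 \<le> norm (tensor_functional x g)"
      using blinfun_apply_le_norm[of "tensor_functional x g" T] x g T by simp
    moreover have "norm (tensor_functional x g) \<le> 1" using norm_tensor_functional_le[of x g] x g by simp
    ultimately show "tensor_functional x g \<in> J_set T" using x g by (simp add: J_set_def)
  qed
  then show "span ?E \<subseteq> span (J_set T)" by (rule span_mono)
  have "J_set T \<subseteq> span ?E"
  proof
    fix f assume f: "f \<in> J_set T"
    show "f \<in> span ?E"
    proof (rule functional_in_span_if_common_kernel)
      show "finite ?E" using X(1) G(1) by simp
    next
      fix S assume "\<forall>e\<in>?E. blinfun_apply e S = 0"
      then have base: "\<forall>x\<in>X. \<forall>g\<in>G. blinfun_apply g (blinfun_apply R x) = 0"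
        if "R = S \<or> R = - S" for R
        using that by (auto simp: blinfun.minus_left blinfun.minus_right)
      have vanish: "\<forall>x\<in>F. \<forall>g\<in>J_set y. blinfun_apply g (blinfun_apply R x) = 0"
        if R: "R = S \<or> R = - S" for R
      proof (intro ballI)
        fix x g assume "x \<in> F" "g \<in> J_set y"
        then show "blinfun_apply g (blinfun_apply R x) = 0"
          by (rule blinfun_apply_apply_vanishes_on_spans[OF base[OF R] subsetD[OF X(3)] subsetD[OF G(3)]])
      qed
      have "blinfun_apply f S \<le> 0" "blinfun_apply f (- S) \<le> 0"
        using J_set_nonpos_if_vanishing_on_face[OF fin T M TF f vanish] by simp_all
      then show "blinfun_apply f S = 0" by (simp add: blinfun.minus_right)
    qed
  qed
  then show "span (J_set T) \<subseteq> span ?E" by (simp add: span_minimal)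
qed

section \<open>Counting the dimension of span J(T)\<close>

lemma linear_image_convex_finite_eq_singleton:
  fixes f :: "'a::real_normed_vector \<Rightarrow> 'b::real_normed_vector"
  assumes "linear f" "convex C" "C \<noteq> {}" "finite (f ` C)"
  obtains y where "f ` C = {y}"
proof -
  have "connected (f ` C)" using assms(1,2) by (intro convex_connected convex_linear_image)
  then show thesis using assms(3,4) connected_finite_iff_sing that by blast
qed

lemma fin_dim_space_basis_of_set:
  fixes A :: "'v::real_normed_vector set"
  assumes "fin_dim_space TYPE('v)" "A \<noteq> {}" "0 \<notin> A"
  obtains B where "B \<subseteq> A" "A \<subseteq> span B" "independent B" "finite B"
    "1 \<le> card B" "card B \<le> dim (UNIV :: 'v set)"
proof -
  obtain B where B: "B \<subseteq> A" "A \<subseteq> span B" "independent B" by (meson basis_exists)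
  have "finite B" "card B \<le> dim (UNIV :: 'v set)"
    using fin_dim_space_independent_bound[OF assms(1) B(3)] by simp_all
  moreover have "B \<noteq> {}" using B(2) assms(2,3) by auto
  ultimately show thesis using B that by (simp add: Suc_le_eq card_gt_0_iff)
qed

lemma k_smooth_eq_card_mult:
  fixes T :: "'a::real_normed_vector \<Rightarrow>\<^sub>L 'b::real_normed_vector"
  assumes fin: "fin_dim_space TYPE('a)" "fin_dim_space TYPE('b)" and T: "norm T = 1"
    and M: "M_op T = F \<union> uminus ` F" and TF: "\<forall>x\<in>F. blinfun_apply T x = y"
    and X: "finite X" "X \<subseteq> F" "F \<subseteq> span X" "independent X"
    and G: "finite G" "G \<subseteq> J_set y" "J_set y \<subseteq> span G" "independent G"
    and k: "k_smooth k T"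
  shows "k = card X * card G"
proof -
  have "k = dim (span ((\<lambda>(x, g). tensor_functional x g) ` (X \<times> G)))"
    using k span_J_set_eq_span_tensor_functionals[OF fin T M TF X(1-3) G(1-3)]
    by (simp add: k_smooth_def)
  also have "\<dots> = card ((\<lambda>(x, g). tensor_functional x g) ` (X \<times> G))"
    using independent_tensor_functionals[OF fin(1) X(1,4) G(1,4)] by (simp add: dim_eq_card_independent)
  also have "\<dots> = card X * card G"
    using inj_on_tensor_functional[OF fin(1) X(4) G(1,4)] by (simp add: card_image card_cartesian_product)
  finally show ?thesis .
qed

theorem mainTheorem14:
  fixes T :: "'a::banach \<Rightarrow>\<^sub>L 'b::banach" and F :: "'a set" and k n m :: nat
  assumes "fin_dim_space TYPE('a)" and "fin_dim_space TYPE('b)"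
    and "polyhedral_space TYPE('a)" and "polyhedral_space TYPE('b)"
    and "dim (UNIV :: 'a set) = n" and "dim (UNIV :: 'b set) = m"
    and "norm T = 1"
    and "ball_face F" and "M_op T = F \<union> uminus ` F"
    and "card (blinfun_apply T ` M_op T) = 2"
    and "k_smooth k T"
  shows "\<exists>p q. 1 \<le> p \<and> p \<le> n \<and> 1 \<le> q \<and> q \<le> m \<and> k = p * q"
proof -
  note fin = assms(1,2) and T = assms(7) and M = assms(9)
  have "finite (blinfun_apply T ` M_op T)" "M_op T \<noteq> {}"
    using assms(10) by (auto intro: card_ge_0_finite)
  then have "finite (blinfun_apply T ` F)" "F \<noteq> {}"
    using M by (auto intro: finite_subset[of _ "blinfun_apply T ` M_op T"])
  moreover have "linear (blinfun_apply T)"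
    by (rule bounded_linear.linear[OF blinfun.bounded_linear_right])
  moreover have "convex F" using assms(8) by (simp add: ball_face_def)
  ultimately obtain y where "blinfun_apply T ` F = {y}"
    by (metis linear_image_convex_finite_eq_singleton)
  then have TF: "\<forall>x\<in>F. blinfun_apply T x = y" by auto
  have F_unit: "norm x = 1" "norm y = 1" if "x \<in> F" for x
    using that M TF T unfolding M_op_def by auto
  then have "0 \<notin> F" by force
  then obtain X where X: "X \<subseteq> F" "F \<subseteq> span X" "independent X" "finite X" "1 \<le> card X" "card X \<le> n"
    using fin_dim_space_basis_of_set[OF fin(1) \<open>F \<noteq> {}\<close>] assms(5) by metis
  have "J_set y \<noteq> {}" "0 \<notin> J_set y"
    using J_set_nonempty[OF fin(2)] F_unit \<open>F \<noteq> {}\<close> by (auto simp: J_set_def)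
  then obtain G where G: "G \<subseteq> J_set y" "J_set y \<subseteq> span G" "independent G" "finite G" "1 \<le> card G"
    "card G \<le> dim (UNIV :: ('b \<Rightarrow>\<^sub>L real) set)"
    by (rule fin_dim_space_basis_of_set[OF fin_dim_space_dual(1)[OF fin(2)]])
  have "card G \<le> m" using G(6) fin_dim_space_dual(2)[OF fin(2)] assms(6) by linarith
  moreover have "k = card X * card G"
    using k_smooth_eq_card_mult[OF fin T M TF X(4,1,2,3) G(4,1,2,3) assms(11)] .
  ultimately show ?thesis using X(5,6) G(5) by blast
qed

end
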